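(* Let $n>6$ be an integer and let $x=\binom{n}{3}-2(n-2)$. Then $$[x]^3_4-1\le k_4(k_3\le x)\le [x]^3_4.$$
   Context: All graphs are finite simple graphs. For a graph $g$ and an integer $r>1$, $k_r(g)$ denotes the number of subgraphs of $g$ isomorphic to the complete graph $K_r$. For $r<s$ and a non-negative integer $x$, $k_s(k_r\le x)$ denotes the maximum of $k_s(g)$ over all graphs $g$ with $k_r(g)\le x$. The $r$-canonical representation of a non-negative integer $x$ is obtained greedily: choose $a_r$ as large as possible with $\binom{a_r}{r}\le x$, then $a_{r-1}$ as large as possible with $\binom{a_{r-1}}{r-1}\le x-\binom{a_r}{r}$, and so on, until $x=\binom{a_r}{r}+\binom{a_{r-1}}{r-1}+\dots+\binom{a_{r-j}}{r-j}$; one has $a_r>a_{r-1}>\dots>a_{r-j}$. For $r<s$, $[x]^r_s=\binom{a_r}{s}+\binom{a_{r-1}}{s-1}+\dots+\binom{a_{r-j}}{s-j}$ (replace $r$ by $s$ in the representation). A binomial coefficient whose top entry is less than its bottom entry is taken to be $0$. *)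

theory Defs
  imports Main
begin

text \<open>A finite simple graph on natural-number vertices: a finite vertex set V and a
 symmetric irreflexive adjacency relation E supported on V. Every finite simple graph
 is isomorphic to one of this form.\<close>
definition simple_graph :: "nat set \<Rightarrow> (nat \<Rightarrow> nat \<Rightarrow> bool) \<Rightarrow> bool" where
  "simple_graph V E \<longleftrightarrow> finite V \<and> (\<forall>u v. E u v \<longrightarrow> E v u) \<and> (\<forall>u. \<not> E u u)
     \<and> (\<forall>u v. E u v \<longrightarrow> u \<in> V \<and> v \<in> V)"

definition kcount :: "nat \<Rightarrow> nat set \<Rightarrow> (nat \<Rightarrow> nat \<Rightarrow> bool) \<Rightarrow> nat" where
  "kcount r V E = card {S. S \<subseteq> V \<and> card S = r \<and> (\<forall>u\<in>S. \<forall>v\<in>S. u \<noteq> v \<longrightarrow> E u v)}"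

definition kmax :: "nat \<Rightarrow> nat \<Rightarrow> nat \<Rightarrow> nat" where
  "kmax s r x = Max {kcount s V E | V E. simple_graph V E \<and> kcount r V E \<le> x}"

text \<open>[x]^r_s computed from the greedy r-canonical representation.
  canon_shift r s x = sum of binom(a_i, s - (r - i)) over the representation of x.\<close>
fun canon_shift :: "nat \<Rightarrow> nat \<Rightarrow> nat \<Rightarrow> nat" where
  "canon_shift 0 s x = 0"
| "canon_shift (Suc r) s x =
     (if x = 0 then 0
      else let a = (GREATEST a. a choose (Suc r) \<le> x)
           in (a choose s) + canon_shift r (s - 1) (x - (a choose (Suc r))))"

end

theory Submission
  imports Defs
begin

text \<open>
  The upper bound is an instance of the Kruskal-Katona theorem, applied to the family of
  4-cliques, whose shadow consists of triangles. Writing \<open>n = j + 5\<close>, the 3-canonical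
  representation of \<open>x\<close> is \<open>C(j+4,3) + C(j+1,2) + C(j,1)\<close>, and only the corresponding
  instances are needed: a 4-uniform family with more than \<open>C(j+4,4) + C(j+1,3) + C(j,2)\<close>
  members has more than \<open>C(j+4,3) + C(j+1,2) + j\<close> sets in its shadow, together with an
  analogous 3-uniform bound. Both are proved by the classical shifting argument: compressing
  towards a pivot \<open>z\<close> preserves the size and does not enlarge the shadow; in a shifted
  family the shadow of the sets avoiding \<open>z\<close> lies in the link of \<open>z\<close>, so the link must
  be large, and the shadow contains the link as well as \<open>z\<close> added to the shadow of the link.

  The lower bound is attained by \<open>K\<^sub>n\<close> minus two disjoint edges, which has exactly
  \<open>C(n,3) - 2(n-2) = x\<close> triangles and \<open>C(n,4) - 2 C(n-2,2) + 1 = [x]\<^sup>3\<^sub>4 - 1\<close>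
  copies of \<open>K\<^sub>4\<close>.
\<close>

section \<open>Shadows and shifting\<close>

definition shadow :: "'a set set \<Rightarrow> 'a set set" where
  "shadow F = {A - {x} | A x. A \<in> F \<and> x \<in> A}"

definition uniform :: "nat \<Rightarrow> 'a set set \<Rightarrow> bool" where
  "uniform k F \<longleftrightarrow> finite F \<and> (\<forall>A\<in>F. finite A \<and> card A = k)"

lemma shadowI: "A \<in> F \<Longrightarrow> x \<in> A \<Longrightarrow> C = A - {x} \<Longrightarrow> C \<in> shadow F"
  unfolding shadow_def by blast

lemma uniform_shadow:
  assumes "uniform k F"
  shows "uniform (k - 1) (shadow F)"
proof -
  have "shadow F = (\<lambda>(A, x). A - {x}) ` (SIGMA A:F. A)"
    unfolding shadow_def by auto
  moreover have "finite (SIGMA A:F. A)"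
    using assms unfolding uniform_def by auto
  ultimately show ?thesis
    using assms unfolding uniform_def shadow_def by auto
qed

lemma finite_shadow: "uniform k F \<Longrightarrow> finite (shadow F)"
  using uniform_shadow unfolding uniform_def by blast

definition shift :: "'a \<Rightarrow> 'a \<Rightarrow> 'a set \<Rightarrow> 'a set" where
  "shift z j A = insert z (A - {j})"

definition compressible :: "'a \<Rightarrow> 'a \<Rightarrow> 'a set set \<Rightarrow> 'a set \<Rightarrow> bool" where
  "compressible z j F A \<longleftrightarrow> j \<in> A \<and> z \<notin> A \<and> shift z j A \<notin> F"

definition compress :: "'a \<Rightarrow> 'a \<Rightarrow> 'a set set \<Rightarrow> 'a set set" where
  "compress z j F =
     {A \<in> F. \<not> compressible z j F A} \<union> shift z j ` {A \<in> F. compressible z j F A}"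

definition shifted :: "'a \<Rightarrow> 'a set set \<Rightarrow> bool" where
  "shifted z F \<longleftrightarrow> (\<forall>A\<in>F. z \<notin> A \<longrightarrow> (\<forall>j\<in>A. shift z j A \<in> F))"

definition link :: "'a \<Rightarrow> 'a set set \<Rightarrow> 'a set set" where
  "link z F = (\<lambda>A. A - {z}) ` {A \<in> F. z \<in> A}"

definition deletion :: "'a \<Rightarrow> 'a set set \<Rightarrow> 'a set set" where
  "deletion z F = {A \<in> F. z \<notin> A}"

lemma inj_on_shift: "inj_on (shift z j) {A. j \<in> A \<and> z \<notin> A}"
proof (rule inj_onI)
  fix A B
  assume A: "A \<in> {A. j \<in> A \<and> z \<notin> A}" and B: "B \<in> {A. j \<in> A \<and> z \<notin> A}"
    and eq: "shift z j A = shift z j B"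
  have "A = insert j (shift z j A - {z})"
    using A unfolding shift_def by auto
  also have "\<dots> = insert j (shift z j B - {z})"
    using eq by simp
  also have "\<dots> = B"
    using B unfolding shift_def by auto
  finally show "A = B" .
qed

lemma card_compress:
  assumes "finite F"
  shows "card (compress z j F) = card F"
proof -
  let ?M = "{A \<in> F. compressible z j F A}"
  let ?N = "{A \<in> F. \<not> compressible z j F A}"
  have "inj_on (shift z j) ?M"
    by (rule inj_on_subset[OF inj_on_shift]) (auto simp: compressible_def)
  have "card (compress z j F) = card ?N + card (shift z j ` ?M)"
    unfolding compress_def using assms
    by (intro card_Un_disjoint) (auto simp: compressible_def)
  also have "\<dots> = card ?N + card ?M"
    using card_image[OF \<open>inj_on (shift z j) ?M\<close>] by simp
  also have "\<dots> = card (?N \<union> ?M)"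
    using assms by (intro card_Un_disjoint[symmetric]) auto
  also have "?N \<union> ?M = F"
    by auto
  finally show ?thesis .
qed

lemma uniform_compress:
  assumes "uniform k F"
  shows "uniform k (compress z j F)"
proof -
  have "finite (shift z j A) \<and> card (shift z j A) = k" if "A \<in> F" "compressible z j F A" for A
  proof -
    have "finite A" "card A = k" "j \<in> A" "z \<notin> A"
      using that assms unfolding uniform_def compressible_def by auto
    moreover from this have "card A > 0"
      by (auto simp: card_gt_0_iff)
    ultimately show ?thesis
      unfolding shift_def by (simp add: card_Diff_singleton)
  qed
  then show ?thesis
    using assms unfolding uniform_def compress_def by auto
qed

lemma deletion_compress:
  "deletion z (compress z j F) = deletion z F - {A \<in> F. compressible z j F A}"
  unfolding deletion_def compress_def shift_def by auto

lemma shadow_of_uncompressed_in_compress: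
  assumes "j \<noteq> z" and D: "D \<in> F" "\<not> compressible z j F D" and "x \<in> D"
  shows "D - {x} \<in> compress z j (shadow F)"
proof -
  have "\<not> compressible z j (shadow F) (D - {x})"
  proof
    assume "compressible z j (shadow F) (D - {x})"
    then have jx: "j \<in> D - {x}" "z \<notin> D - {x}" "shift z j (D - {x}) \<notin> shadow F"
      unfolding compressible_def by auto
    show False
    proof (cases "z \<in> D")
      case True
      then have "shift z j (D - {x}) = D - {j}"
        using jx \<open>j \<noteq> z\<close> unfolding shift_def by auto
      moreover have "D - {j} \<in> shadow F"
        using jx D by (intro shadowI[of D _ j]) auto
      ultimately show False
        using jx by simp
    next
      case False
      then have "shift z j D \<in> F"
        using D jx unfolding compressible_def by auto
      moreover have "x \<in> shift z j D" "shift z j (D - {x}) = shift z j D - {x}"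
        using False jx \<open>x \<in> D\<close> unfolding shift_def by auto
      ultimately have "shift z j (D - {x}) \<in> shadow F"
        by (rule shadowI)
      then show False
        using jx by simp
    qed
  qed
  moreover have "D - {x} \<in> shadow F"
    using D(1) \<open>x \<in> D\<close> refl by (rule shadowI)
  ultimately show ?thesis
    unfolding compress_def by blast
qed

lemma shadow_of_compressed_in_compress:
  assumes "j \<noteq> z" and E: "E \<in> F" "compressible z j F E" and x: "x \<in> shift z j E"
  shows "shift z j E - {x} \<in> compress z j (shadow F)"
proof (cases "x = z")
  case True
  then have "shift z j E - {x} = E - {j}" "j \<in> E"
    using E unfolding compressible_def shift_def by auto
  then show ?thesis
    using E unfolding compress_def compressible_def by (auto intro: shadowI)
next
  case False
  have "x \<in> E" "x \<noteq> j" "j \<in> E" "z \<notin> E"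
    using False x E unfolding compressible_def shift_def by auto
  then have "E - {x} \<in> shadow F" "j \<in> E - {x}" "z \<notin> E - {x}"
    and "shift z j E - {x} = shift z j (E - {x})"
    using E unfolding shift_def by (auto intro: shadowI)
  moreover have "z \<in> shift z j (E - {x})" "j \<notin> shift z j (E - {x})"
    using \<open>j \<noteq> z\<close> unfolding shift_def by auto
  ultimately show ?thesis
    unfolding compress_def compressible_def by (cases "shift z j (E - {x}) \<in> shadow F") auto
qed

lemma shadow_compress_subset:
  assumes "j \<noteq> z"
  shows "shadow (compress z j F) \<subseteq> compress z j (shadow F)"
proof
  fix C assume "C \<in> shadow (compress z j F)"
  then obtain D x where D: "D \<in> compress z j F" "x \<in> D" and C: "C = D - {x}"
    unfolding shadow_def by auto
  from D(1) consider (uncompressed) "D \<in> F" "\<not> compressible z j F D"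
    | (compressed) E where "E \<in> F" "compressible z j F E" "D = shift z j E"
    unfolding compress_def by auto
  then show "C \<in> compress z j (shadow F)"
  proof cases
    case uncompressed
    then show ?thesis
      unfolding C using shadow_of_uncompressed_in_compress[OF assms] D(2) by blast
  next
    case (compressed E)
    then show ?thesis
      unfolding C using shadow_of_compressed_in_compress[OF assms] D(2) by blast
  qed
qed

lemma exists_shifted:
  fixes F :: "'a set set" and z :: 'a
  assumes "uniform k F"
  shows "\<exists>F'. uniform k F' \<and> shifted z F' \<and> card F' = card F \<and> card (shadow F') \<le> card (shadow F)"
  using assms
proof (induction "card (deletion z F)" arbitrary: F rule: less_induct)
  case less
  show ?case
  proof (cases "shifted z F")
    case True
    with less.prems show ?thesis
      by (intro exI[of _ F]) simp
  next
    case False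
    then obtain A j where A: "A \<in> F" "z \<notin> A" "j \<in> A" "shift z j A \<notin> F"
      unfolding shifted_def by blast
    have "j \<noteq> z"
      using A by auto
    have fin: "finite F" "finite (shadow F)"
      using less.prems finite_shadow unfolding uniform_def by auto
    let ?F = "compress z j F"
    have "A \<in> deletion z F \<inter> {A \<in> F. compressible z j F A}"
      using A unfolding deletion_def compressible_def by auto
    then have "card (deletion z ?F) < card (deletion z F)"
      unfolding deletion_compress using fin by (intro psubset_card_mono) (auto simp: deletion_def)
    from less.hyps[OF this uniform_compress[OF less.prems]]
    obtain F' where F': "uniform k F'" "shifted z F'" "card F' = card ?F"
        "card (shadow F') \<le> card (shadow ?F)"
      by blast
    have "card (shadow ?F) \<le> card (compress z j (shadow F))"
      using shadow_compress_subset[OF \<open>j \<noteq> z\<close>] fin unfolding compress_def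
      by (intro card_mono) auto
    also have "\<dots> = card (shadow F)"
      using card_compress[OF fin(2)] .
    finally show ?thesis
      using F' card_compress[OF fin(1)] by auto
  qed
qed

lemma card_link_deletion:
  assumes "finite F"
  shows "card F = card (link z F) + card (deletion z F)"
proof -
  have "inj_on (\<lambda>A. A - {z}) {A \<in> F. z \<in> A}"
    by (rule inj_onI) (metis (no_types, lifting) insert_Diff mem_Collect_eq)
  then have "card (link z F) = card {A \<in> F. z \<in> A}"
    unfolding link_def by (rule card_image)
  moreover have "card F = card ({A \<in> F. z \<in> A} \<union> deletion z F)"
    by (rule arg_cong[where f = card]) (auto simp: deletion_def)
  moreover have "\<dots> = card {A \<in> F. z \<in> A} + card (deletion z F)"
    using assms by (intro card_Un_disjoint) (auto simp: deletion_def)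
  ultimately show ?thesis
    by simp
qed

lemma uniform_link: "uniform k F \<Longrightarrow> uniform (k - 1) (link z F)"
  unfolding uniform_def link_def by auto

lemma uniform_deletion: "uniform k F \<Longrightarrow> uniform k (deletion z F)"
  unfolding uniform_def deletion_def by auto

lemma card_link_shadow_le:
  assumes "uniform k F"
  shows "card (link z F) + card (shadow (link z F)) \<le> card (shadow F)"
proof -
  have fin: "finite (link z F)" "finite (shadow (link z F))"
    using uniform_link[OF assms] finite_shadow unfolding uniform_def by blast+
  have "link z F \<subseteq> shadow F"
    unfolding link_def by (auto intro: shadowI)
  have "insert z ` shadow (link z F) \<subseteq> shadow F"
  proof
    fix C assume "C \<in> insert z ` shadow (link z F)"
    then obtain A y where "A \<in> F" "z \<in> A" "y \<in> A - {z}" "C = insert z (A - {z} - {y})"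
      unfolding shadow_def link_def by blast
    then show "C \<in> shadow F"
      by (intro shadowI[of A _ y]) auto
  qed
  moreover have "inj_on (insert z) (shadow (link z F))"
    by (rule inj_onI) (auto simp: shadow_def link_def insert_ident)
  moreover have "link z F \<inter> insert z ` shadow (link z F) = {}"
    unfolding link_def by auto
  ultimately have "card (link z F) + card (shadow (link z F))
      = card (link z F \<union> insert z ` shadow (link z F))"
    using fin by (simp add: card_Un_disjoint card_image)
  also have "\<dots> \<le> card (shadow F)"
    using \<open>link z F \<subseteq> shadow F\<close> \<open>insert z ` shadow (link z F) \<subseteq> shadow F\<close>
    by (intro card_mono finite_shadow[OF assms]) auto
  finally show ?thesis .
qed

lemma shadow_deletion_subset_link:
  assumes "shifted z F"
  shows "shadow (deletion z F) \<subseteq> link z F"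
proof
  fix C assume "C \<in> shadow (deletion z F)"
  then obtain A j where A: "A \<in> F" "z \<notin> A" "j \<in> A" "C = A - {j}"
    unfolding shadow_def deletion_def by blast
  then have "shift z j A \<in> F"
    using assms unfolding shifted_def by blast
  moreover have "C = shift z j A - {z}"
    using A unfolding shift_def by auto
  ultimately show "C \<in> link z F"
    unfolding link_def shift_def by blast
qed

section \<open>Two instances of the Kruskal-Katona theorem\<close>

lemma card_shadow_ge_by_shifting:
  fixes F :: "'a set set"
  assumes F: "uniform (Suc k) F" and card_F: "a + c \<le> card F + 1"
    and link_bound:
      "\<And>H :: 'a set set. uniform k H \<Longrightarrow> a \<le> card H \<Longrightarrow> b \<le> card (shadow H)"
    and deletion_bound:
      "\<And>G :: 'a set set. uniform (Suc k) G \<Longrightarrow> c \<le> card G \<Longrightarrow> a \<le> card (shadow G)"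
  shows "a + b \<le> card (shadow F)"
proof -
  fix z :: 'a
  obtain F' where F': "uniform (Suc k) F'" "shifted z F'" "card F' = card F"
      "card (shadow F') \<le> card (shadow F)"
    using exists_shifted[OF F] by blast
  have fin: "finite F'" "finite (link z F')"
    using F' uniform_link[OF F'(1)] unfolding uniform_def by auto
  have link_large: "a \<le> card (link z F')"
  proof (rule ccontr)
    assume small: "\<not> a \<le> card (link z F')"
    then have "c \<le> card (deletion z F')"
      using card_link_deletion[OF fin(1), of z] card_F F'(3) by linarith
    then have "a \<le> card (shadow (deletion z F'))"
      using deletion_bound uniform_deletion[OF F'(1)] by blast
    also have "\<dots> \<le> card (link z F')"
      by (rule card_mono[OF fin(2) shadow_deletion_subset_link[OF F'(2)]])
    finally show False
      using small by simp
  qed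
  then have "b \<le> card (shadow (link z F'))"
    using link_bound uniform_link[OF F'(1)] by simp
  then show ?thesis
    using link_large card_link_shadow_le[OF F'(1), of z] F'(4) by linarith
qed

lemma card_le_card_shadow_choose_2:
  assumes "uniform 2 H"
  shows "card H \<le> card (shadow H) choose 2"
proof -
  have fin: "finite (\<Union>H)"
    using assms unfolding uniform_def by auto
  have singletons: "(\<lambda>v. {v}) ` \<Union>H \<subseteq> shadow H"
  proof
    fix C assume "C \<in> (\<lambda>v. {v}) ` \<Union>H"
    then obtain v A where vA: "v \<in> A" "A \<in> H" "C = {v}"
      by auto
    then have "card (A - {v}) = 1"
      using assms unfolding uniform_def by simp
    then obtain w where "A - {v} = {w}"
      by (rule card_1_singletonE)
    then show "C \<in> shadow H"
      using vA by (intro shadowI[of A _ w]) auto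
  qed
  have "card (\<Union>H) = card ((\<lambda>v. {v}) ` \<Union>H)"
    by (rule card_image[symmetric]) (simp add: inj_on_def)
  also have "\<dots> \<le> card (shadow H)"
    by (rule card_mono[OF finite_shadow[OF assms] singletons])
  finally have "card (\<Union>H) \<le> card (shadow H)" .
  have "card H \<le> card {S. S \<subseteq> \<Union>H \<and> card S = 2}"
    using assms fin unfolding uniform_def by (intro card_mono) auto
  also have "\<dots> = card (\<Union>H) choose 2"
    using n_subsets[OF fin] .
  also have "\<dots> \<le> card (shadow H) choose 2"
    by (rule binomial_right_mono) fact
  finally show ?thesis .
qed

lemma card_shadow_ge_of_two_members:
  assumes F: "uniform k F" and "2 \<le> k" and "2 \<le> card F"
  shows "k + 1 \<le> card (shadow F)"
proof -
  have "\<not> card F \<le> Suc 0"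
    using assms(3) by simp
  then obtain A B where AB: "A \<in> F" "B \<in> F" "A \<noteq> B"
    using F card_le_Suc0_iff_eq unfolding uniform_def by blast
  have A: "finite A" "card A = k" and B: "finite B" "card B = k"
    using F AB unfolding uniform_def by auto
  obtain y where y: "y \<in> B" "y \<notin> A"
    using AB A B card_subset_eq by blast
  have "card (B - {y}) \<noteq> 0"
    using B y \<open>2 \<le> k\<close> by simp
  then obtain x where "x \<in> B - {y}"
    by (metis card.empty ex_in_conv)
  then have x: "x \<in> B" "x \<noteq> y"
    by auto
  have "inj_on (\<lambda>a. A - {a}) A"
    by (rule inj_onI) auto
  moreover have "B - {x} \<notin> (\<lambda>a. A - {a}) ` A"
    using x y by auto
  ultimately have "k + 1 = card (insert (B - {x}) ((\<lambda>a. A - {a}) ` A))"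
    using A by (simp add: card_image)
  also have "\<dots> \<le> card (shadow F)"
    using AB x by (intro card_mono finite_shadow[OF F]) (auto intro: shadowI)
  finally show ?thesis .
qed

lemma card_shadow_ge_3_uniform:
  fixes G :: "'a set set"
  assumes "uniform 3 G" and "(j + 4 choose 3) + (j + 2 choose 2) \<le> card G"
  shows "(j + 4 choose 2) + j + 2 \<le> card (shadow G)"
  using assms
proof (induction j arbitrary: G rule: less_induct)
  case (less j)
  have link_bound: "j + 4 \<le> card (shadow H)"
    if "uniform 2 H" "(j + 3 choose 2) + j + 1 \<le> card H" for H :: "'a set set"
  proof (rule ccontr)
    assume "\<not> j + 4 \<le> card (shadow H)"
    then have "card (shadow H) choose 2 \<le> j + 3 choose 2"
      by (intro binomial_right_mono) simp
    then show False
      using card_le_card_shadow_choose_2[OF that(1)] that(2) by simp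
  qed
  have deletion_bound: "(j + 3 choose 2) + j + 1 \<le> card (shadow G')"
    if "uniform 3 G'" "(j + 3 choose 3) + (j + 1 choose 2) + 1 \<le> card G'" for G' :: "'a set set"
  proof (cases j)
    case 0
    then show ?thesis
      using card_shadow_ge_of_two_members[OF that(1)] that(2) by (simp add: eval_nat_numeral)
  next
    case (Suc i)
    then show ?thesis
      using less.IH[of i G'] that by (simp add: eval_nat_numeral)
  qed
  have "((j + 3 choose 2) + j + 1) + (j + 4) \<le> card (shadow G)"
  proof (rule card_shadow_ge_by_shifting[where k = 2 and c = "(j + 3 choose 3) + (j + 1 choose 2) + 1"])
    show "uniform (Suc 2) G"
      using less.prems(1) by simp
    show "(j + 3 choose 2) + j + 1 + ((j + 3 choose 3) + (j + 1 choose 2) + 1) \<le> card G + 1"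
      using less.prems(2) by (simp add: eval_nat_numeral)
  qed (use link_bound deletion_bound in simp_all)
  then show ?case
    by (simp add: eval_nat_numeral)
qed

lemma card_shadow_ge_4_uniform:
  fixes F :: "'a set set"
  assumes "uniform 4 F" and "(j + 4 choose 4) + (j + 1 choose 3) + (j choose 2) + 1 \<le> card F"
  shows "(j + 4 choose 3) + (j + 1 choose 2) + j + 1 \<le> card (shadow F)"
  using assms
proof (induction j arbitrary: F)
  case 0
  then show ?case
    using card_shadow_ge_of_two_members[of 4 F] by (simp add: eval_nat_numeral)
next
  case (Suc i)
  have deletion_bound: "(i + 4 choose 3) + (i + 2 choose 2) \<le> card (shadow G)"
    if "uniform 4 G" "(i + 4 choose 4) + (i + 1 choose 3) + (i choose 2) + 1 \<le> card G"
    for G :: "'a set set"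
    using Suc.IH[OF that] by (simp add: eval_nat_numeral)
  have "((i + 4 choose 3) + (i + 2 choose 2)) + ((i + 4 choose 2) + i + 2) \<le> card (shadow F)"
  proof (rule card_shadow_ge_by_shifting[where k = 3
        and c = "(i + 4 choose 4) + (i + 1 choose 3) + (i choose 2) + 1"])
    show "uniform (Suc 3) F"
      using Suc.prems(1) by simp
    show "(i + 4 choose 3) + (i + 2 choose 2) + ((i + 4 choose 4) + (i + 1 choose 3) + (i choose 2) + 1)
        \<le> card F + 1"
      using Suc.prems(2) by (simp add: eval_nat_numeral)
  qed (use card_shadow_ge_3_uniform deletion_bound in simp_all)
  then show ?case
    by (simp add: eval_nat_numeral)
qed

section \<open>Clique counts\<close>

definition cliques :: "nat \<Rightarrow> 'a set \<Rightarrow> ('a \<Rightarrow> 'a \<Rightarrow> bool) \<Rightarrow> 'a set set" where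
  "cliques r V E = {S. S \<subseteq> V \<and> card S = r \<and> (\<forall>u\<in>S. \<forall>v\<in>S. u \<noteq> v \<longrightarrow> E u v)}"

lemma kcount_eq_card_cliques: "kcount r V E = card (cliques r V E)"
  unfolding kcount_def cliques_def ..

lemma uniform_cliques: "finite V \<Longrightarrow> uniform r (cliques r V E)"
  unfolding uniform_def cliques_def
  by (auto intro: finite_subset[of _ "Pow V"] finite_subset[of _ V])

lemma shadow_cliques_subset: "finite V \<Longrightarrow> shadow (cliques (Suc r) V E) \<subseteq> cliques r V E"
  unfolding shadow_def cliques_def by (auto dest: finite_subset)

lemma kcount_4_le_of_kcount_3_le:
  assumes "finite V" and "kcount 3 V E \<le> (j + 4 choose 3) + (j + 1 choose 2) + j"
  shows "kcount 4 V E \<le> (j + 4 choose 4) + (j + 1 choose 3) + (j choose 2)"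
proof (rule ccontr)
  assume "\<not> ?thesis"
  then have "(j + 4 choose 4) + (j + 1 choose 3) + (j choose 2) + 1 \<le> card (cliques 4 V E)"
    by (simp add: kcount_eq_card_cliques)
  then have "(j + 4 choose 3) + (j + 1 choose 2) + j + 1 \<le> card (shadow (cliques 4 V E))"
    by (rule card_shadow_ge_4_uniform[OF uniform_cliques[OF assms(1)]])
  also have "\<dots> \<le> kcount 3 V E"
    unfolding kcount_eq_card_cliques using shadow_cliques_subset[OF assms(1), of 3 E]
    by (intro card_mono) (simp_all add: uniform_cliques[OF assms(1), unfolded uniform_def])
  finally show False
    using assms(2) by simp
qed

lemma kmax_bounds:
  assumes bound: "\<And>V E. simple_graph V E \<Longrightarrow> kcount r V E \<le> x \<Longrightarrow> kcount s V E \<le> b"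
    and "simple_graph V E" and "kcount r V E \<le> x"
  shows "kcount s V E \<le> kmax s r x" and "kmax s r x \<le> b"
proof -
  let ?K = "{kcount s V E | V E. simple_graph V E \<and> kcount r V E \<le> x}"
  have "?K \<subseteq> {..b}"
    using bound by auto
  then have "finite ?K"
    by (rule finite_subset) simp
  have "kcount s V E \<in> ?K"
    using assms(2,3) by blast
  then show "kcount s V E \<le> kmax s r x"
    unfolding kmax_def by (rule Max_ge[OF \<open>finite ?K\<close>])
  have "kmax s r x \<in> ?K"
    unfolding kmax_def using \<open>finite ?K\<close> \<open>kcount s V E \<in> ?K\<close> by (intro Max_in) auto
  then show "kmax s r x \<le> b"
    using \<open>?K \<subseteq> {..b}\<close> by auto
qed

section \<open>The canonical representation\<close>

lemma canon_shift_eq: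
  assumes "0 < r" and "0 < x" and "(a choose r) \<le> x" and "x < (Suc a choose r)"
  shows "canon_shift r s x = (a choose s) + canon_shift (r - 1) (s - 1) (x - (a choose r))"
proof -
  have "(GREATEST b. (b choose r) \<le> x) = a"
  proof (rule Greatest_equality)
    fix b assume "(b choose r) \<le> x"
    then show "b \<le> a"
      using assms(4) binomial_right_mono[of "Suc a" b r] by linarith
  qed (fact assms(3))
  then show ?thesis
    using assms(1,2) by (cases r) (simp_all add: Let_def)
qed

lemma canon_shift_3_4:
  assumes "0 < j"
  shows "canon_shift 3 4 ((j + 4 choose 3) + (j + 1 choose 2) + j)
    = (j + 4 choose 4) + (j + 1 choose 3) + (j choose 2)"
proof -
  have "(j + 1 choose 2) + j < Suc (j + 1) choose 2"
    and "(j + 4 choose 3) + (j + 1 choose 2) + j < Suc (j + 4) choose 3"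
    by (simp_all add: eval_nat_numeral)
  moreover have "canon_shift 1 2 j = j choose 2"
    using canon_shift_eq[of 1 j j 2] assms by simp
  ultimately show ?thesis
    using assms canon_shift_eq[of 2 "(j + 1 choose 2) + j" "j + 1" 3]
      canon_shift_eq[of 3 "(j + 4 choose 3) + (j + 1 choose 2) + j" "j + 4" 4]
    by simp
qed

section \<open>The extremal graph\<close>

lemma card_supersets:
  assumes "finite V" and "K \<subseteq> V" and "card K \<le> r"
  shows "card {S. S \<subseteq> V \<and> card S = r \<and> K \<subseteq> S} = (card V - card K) choose (r - card K)"
proof -
  have fin: "finite K" "\<And>T. T \<subseteq> V \<Longrightarrow> finite T"
    using assms(1,2) finite_subset by blast+
  have "bij_betw (\<lambda>T. T \<union> K) {T. T \<subseteq> V - K \<and> card T = r - card K}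
      {S. S \<subseteq> V \<and> card S = r \<and> K \<subseteq> S}"
  proof (rule bij_betw_byWitness[where f' = "\<lambda>S. S - K"])
    have "card (T \<union> K) = card T + card K" if "T \<subseteq> V - K" for T
      using that fin by (intro card_Un_disjoint) auto
    then show "(\<lambda>T. T \<union> K) ` {T. T \<subseteq> V - K \<and> card T = r - card K}
        \<subseteq> {S. S \<subseteq> V \<and> card S = r \<and> K \<subseteq> S}"
      using assms by auto
    show "(\<lambda>S. S - K) ` {S. S \<subseteq> V \<and> card S = r \<and> K \<subseteq> S}
        \<subseteq> {T. T \<subseteq> V - K \<and> card T = r - card K}"
      using fin by (auto simp: card_Diff_subset)
  qed auto
  then have "card {S. S \<subseteq> V \<and> card S = r \<and> K \<subseteq> S}
      = card {T. T \<subseteq> V - K \<and> card T = r - card K}"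
    by (simp add: bij_betw_same_card)
  also have "\<dots> = (card V - card K) choose (r - card K)"
    using assms by (simp add: n_subsets card_Diff_subset fin)
  finally show ?thesis .
qed

definition complete_minus_two_edges :: "nat \<Rightarrow> nat \<Rightarrow> nat \<Rightarrow> bool" where
  "complete_minus_two_edges n u v \<longleftrightarrow>
     u < n \<and> v < n \<and> u \<noteq> v \<and> {u, v} \<noteq> {0, 1} \<and> {u, v} \<noteq> {2, 3}"

lemma simple_graph_complete_minus_two_edges: "simple_graph {..<n} (complete_minus_two_edges n)"
  unfolding simple_graph_def complete_minus_two_edges_def by (auto simp: insert_commute)

lemma cliques_complete_minus_two_edges:
  "cliques r {..<n} (complete_minus_two_edges n)
    = {S. S \<subseteq> {..<n} \<and> card S = r} - ({S. {0, 1} \<subseteq> S} \<union> {S. {2, 3} \<subseteq> S})"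
proof -
  have "(\<forall>u\<in>S. \<forall>v\<in>S. u \<noteq> v \<longrightarrow> complete_minus_two_edges n u v)
      \<longleftrightarrow> \<not> {0, 1} \<subseteq> S \<and> \<not> {2, 3} \<subseteq> S" if S: "S \<subseteq> {..<n}" for S
  proof
    assume clique: "\<forall>u\<in>S. \<forall>v\<in>S. u \<noteq> v \<longrightarrow> complete_minus_two_edges n u v"
    show "\<not> {0, 1} \<subseteq> S \<and> \<not> {2, 3} \<subseteq> S"
      using clique[rule_format, of 0 1] clique[rule_format, of 2 3]
      unfolding complete_minus_two_edges_def by auto
  next
    assume avoids: "\<not> {0, 1} \<subseteq> S \<and> \<not> {2, 3} \<subseteq> S"
    show "\<forall>u\<in>S. \<forall>v\<in>S. u \<noteq> v \<longrightarrow> complete_minus_two_edges n u v"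
    proof (intro ballI impI)
      fix u v assume "u \<in> S" "v \<in> S" "u \<noteq> v"
      then have "{u, v} \<subseteq> S" "u < n" "v < n"
        using S by auto
      then show "complete_minus_two_edges n u v"
        using avoids \<open>u \<noteq> v\<close> unfolding complete_minus_two_edges_def by metis
    qed
  qed
  then show ?thesis
    unfolding cliques_def by auto
qed

lemma kcount_complete_minus_two_edges:
  assumes "4 \<le> n" and "2 \<le> r"
  shows "kcount r {..<n} (complete_minus_two_edges n) + 2 * (n - 2 choose (r - 2))
    = (n choose r) + card {S. S \<subseteq> {..<n} \<and> card S = r \<and> {0, 1, 2, 3} \<subseteq> S}"
proof -
  let ?A = "{S. S \<subseteq> {..<n} \<and> card S = r}"
  let ?P = "\<lambda>K. {S. S \<subseteq> {..<n} \<and> card S = r \<and> K \<subseteq> S}"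
  have fin: "finite ?A" "finite (?P K)" for K
    by (auto intro: finite_subset[of _ "Pow {..<n}"])
  have sub: "?P {0, 1} \<union> ?P {2, 3} \<subseteq> ?A"
    by auto
  have "cliques r {..<n} (complete_minus_two_edges n) = ?A - (?P {0, 1} \<union> ?P {2, 3})"
    unfolding cliques_complete_minus_two_edges by auto
  then have "kcount r {..<n} (complete_minus_two_edges n) = card (?A - (?P {0, 1} \<union> ?P {2, 3}))"
    by (simp only: kcount_eq_card_cliques)
  also have "\<dots> = card ?A - card (?P {0, 1} \<union> ?P {2, 3})"
    by (rule card_Diff_subset[OF finite_subset[OF sub fin(1)] sub])
  finally have "kcount r {..<n} (complete_minus_two_edges n) = card ?A - card (?P {0, 1} \<union> ?P {2, 3})" .
  moreover have "card (?P {0, 1} \<union> ?P {2, 3}) \<le> card ?A"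
    using fin sub by (intro card_mono)
  moreover have "card (?P {0, 1}) + card (?P {2, 3}) = card (?P {0, 1} \<union> ?P {2, 3}) + card (?P {0, 1, 2, 3})"
  proof -
    have "?P {0, 1} \<inter> ?P {2, 3} = ?P {0, 1, 2, 3}"
      by auto
    with card_Un_Int[OF fin(2)[of "{0, 1}"] fin(2)[of "{2, 3}"]] show ?thesis
      by (simp only:)
  qed
  moreover have "card (?P {0, 1}) = n - 2 choose (r - 2)" "card (?P {2, 3}) = n - 2 choose (r - 2)"
    using card_supersets[of "{..<n}" "{0, 1}" r] card_supersets[of "{..<n}" "{2, 3}" r] assms
    by (simp_all add: numeral_2_eq_2)
  moreover have "card ?A = n choose r"
    using n_subsets[of "{..<n}" r] by simp
  ultimately show ?thesis
    by linarith
qed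

lemma kcount_3_complete_minus_two_edges:
  assumes "4 \<le> n"
  shows "kcount 3 {..<n} (complete_minus_two_edges n) = (n choose 3) - 2 * (n - 2)"
proof -
  have "\<not> {0, 1, 2, 3} \<subseteq> S" if "S \<subseteq> {..<n}" "card S = 3" for S :: "nat set"
  proof
    assume "{0, 1, 2, 3} \<subseteq> S"
    then have "card {0 :: nat, 1, 2, 3} \<le> card S"
      using that(1) by (intro card_mono) (auto intro: finite_subset)
    then show False
      using that(2) by simp
  qed
  then have no_supersets: "{S. S \<subseteq> {..<n} \<and> card S = 3 \<and> {0, 1, 2, 3} \<subseteq> S} = {}"
    by blast
  show ?thesis
    using kcount_complete_minus_two_edges[OF assms, of 3] unfolding no_supersets by simp
qed

lemma kcount_4_complete_minus_two_edges:
  assumes "4 \<le> n"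
  shows "kcount 4 {..<n} (complete_minus_two_edges n) + 2 * (n - 2 choose 2) = (n choose 4) + 1"
  using kcount_complete_minus_two_edges[OF assms, of 4] card_supersets[of "{..<n}" "{0, 1, 2, 3}" 4] assms
  by simp

theorem theorem5:
  fixes n x :: nat
  assumes "n > 6"
    and "x = (n choose 3) - 2 * (n - 2)"
  shows "canon_shift 3 4 x - 1 \<le> kmax 4 3 x \<and> kmax 4 3 x \<le> canon_shift 3 4 x"
proof -
  define j where "j = n - 5"
  have n: "n = j + 5" and "0 < j"
    using assms(1) unfolding j_def by auto
  have "(j + 5 choose 3) = (j + 4 choose 3) + (j + 1 choose 2) + j + 2 * (j + 3)"
    by (simp add: eval_nat_numeral)
  then have x: "x = (j + 4 choose 3) + (j + 1 choose 2) + j"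
    using assms(2) unfolding n by simp
  have canon: "canon_shift 3 4 x = (j + 4 choose 4) + (j + 1 choose 3) + (j choose 2)"
    unfolding x by (rule canon_shift_3_4[OF \<open>0 < j\<close>])
  have upper: "kcount 4 V E \<le> canon_shift 3 4 x" if "simple_graph V E" "kcount 3 V E \<le> x" for V E
    unfolding canon using kcount_4_le_of_kcount_3_le[of V E j] that x unfolding simple_graph_def by simp
  let ?G = "complete_minus_two_edges n"
  have "kcount 3 {..<n} ?G \<le> x"
    using kcount_3_complete_minus_two_edges[of n] assms by simp
  note kmax = kmax_bounds[OF upper simple_graph_complete_minus_two_edges this]
  have "(n choose 4) + 2 = (j + 4 choose 4) + (j + 1 choose 3) + (j choose 2) + 2 * (n - 2 choose 2)"
    unfolding n by (simp add: eval_nat_numeral)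
  then have "kcount 4 {..<n} ?G + 1 = canon_shift 3 4 x"
    using kcount_4_complete_minus_two_edges[of n] assms(1) unfolding canon by linarith
  with kmax show ?thesis
    by linarith
qed

end
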